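(* Let $\varphi:\Lambda\to\Gamma$ be a regular covering map of finite simplicial graphs without isolated vertices. Then the group $\mathrm{FD}(\varphi)$ is commensurable to a subgroup of the Torelli group $\mathrm{IA}(A_\Lambda)$. More precisely, $\mathrm{FD}(\varphi)/(\mathrm{FD}(\varphi)\cap\mathrm{IA}(A_\Lambda))$ is isomorphic to $\mathrm{Deck}(\varphi)$.
   Context: Graphs are finite simplicial graphs; $A_\Gamma=\langle v\in V\Gamma\mid [u,v]=1\text{ for every edge }\{u,v\}\rangle$ is the right-angled Artin group. A covering map of graphs $\varphi:\Lambda\to\Gamma$ is a surjective simplicial map that maps the neighbours of each vertex $u$ bijectively onto the neighbours of $\varphi(u)$; $\mathrm{Deck}(\varphi)$ is the group of graph automorphisms $\mu$ of $\Lambda$ with $\varphi\mu=\varphi$, regarded as a subgroup of $\mathrm{Aut}(A_\Lambda)$ by permuting generators; $\varphi$ is regular if $\mathrm{Deck}(\varphi)$ acts transitively on each fiber. Let $\phi:A_\Lambda\to A_\Gamma$ be the induced homomorphism $u\mapsto\varphi(u)$. $\mathrm{FD}(\varphi)$ is the group of all $F\in\mathrm{Aut}(A_\Lambda)$ with $\phi\circ F=\phi$ (lifts of the identity of $A_\Gamma$). $\mathrm{IA}(A_\Lambda)$ is the kernel of the natural map $\mathrm{Aut}(A_\Lambda)\to\mathrm{GL}(H_1(A_\Lambda))$ given by the action on the abelianization. *)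

theory Defs
  imports "HOL-Algebra.Algebra"
begin

definition simplicial_graph :: "'a set \<Rightarrow> 'a set set \<Rightarrow> bool" where
  "simplicial_graph V E \<longleftrightarrow> (\<forall>e\<in>E. \<exists>u v. e = {u, v} \<and> u \<noteq> v \<and> u \<in> V \<and> v \<in> V)"

definition finite_graph :: "'a set \<Rightarrow> 'a set set \<Rightarrow> bool" where
  "finite_graph V E \<longleftrightarrow> simplicial_graph V E \<and> finite V"

definition nbrs :: "'a set set \<Rightarrow> 'a \<Rightarrow> 'a set" where
  "nbrs E u = {v. {u, v} \<in> E}"

definition no_isolated_vertices :: "'a set \<Rightarrow> 'a set set \<Rightarrow> bool" where
  "no_isolated_vertices V E \<longleftrightarrow> (\<forall>v\<in>V. nbrs E v \<noteq> {})"

definition covering_map ::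
  "'a set \<Rightarrow> 'a set set \<Rightarrow> 'b set \<Rightarrow> 'b set set \<Rightarrow> ('a \<Rightarrow> 'b) \<Rightarrow> bool" where
  "covering_map VL EL VG EG \<phi> \<longleftrightarrow>
     \<phi> ` VL = VG \<and>
     (\<forall>u v. {u, v} \<in> EL \<longrightarrow> {\<phi> u, \<phi> v} \<in> EG) \<and>
     (\<forall>u\<in>VL. bij_betw \<phi> (nbrs EL u) (nbrs EG (\<phi> u)))"

definition graph_auts :: "'a set \<Rightarrow> 'a set set \<Rightarrow> ('a \<Rightarrow> 'a) set" where
  "graph_auts V E = {\<mu> \<in> Bij V. \<forall>u\<in>V. \<forall>v\<in>V. {\<mu> u, \<mu> v} \<in> E \<longleftrightarrow> {u, v} \<in> E}"

definition deck :: "'a set \<Rightarrow> 'a set set \<Rightarrow> ('a \<Rightarrow> 'b) \<Rightarrow> ('a \<Rightarrow> 'a) set" where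
  "deck VL EL \<phi> = {\<mu> \<in> graph_auts VL EL. \<forall>u\<in>VL. \<phi> (\<mu> u) = \<phi> u}"

definition deck_group :: "'a set \<Rightarrow> 'a set set \<Rightarrow> ('a \<Rightarrow> 'b) \<Rightarrow> ('a \<Rightarrow> 'a) monoid" where
  "deck_group VL EL \<phi> = BijGroup VL \<lparr>carrier := deck VL EL \<phi>\<rparr>"

definition regular_covering ::
  "'a set \<Rightarrow> 'a set set \<Rightarrow> 'b set \<Rightarrow> 'b set set \<Rightarrow> ('a \<Rightarrow> 'b) \<Rightarrow> bool" where
  "regular_covering VL EL VG EG \<phi> \<longleftrightarrow>
     covering_map VL EL VG EG \<phi> \<and>
     (\<forall>u\<in>VL. \<forall>u'\<in>VL. \<phi> u = \<phi> u' \<longrightarrow> (\<exists>\<mu>\<in>deck VL EL \<phi>. \<mu> u = u'))"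

text \<open>Words: lists of letters (v, b); b = True means the inverse v^{-1}.\<close>

type_synonym 'a word = "('a \<times> bool) list"

inductive_set raag_step :: "'a set set \<Rightarrow> ('a word \<times> 'a word) set" for E where
  cancel: "(u @ [(a, b), (a, \<not> b)] @ w, u @ w) \<in> raag_step E"
| commute: "{fst x, fst y} \<in> E \<Longrightarrow> (u @ [x, y] @ w, u @ [y, x] @ w) \<in> raag_step E"

definition raag_words :: "'a set \<Rightarrow> 'a word set" where
  "raag_words V = lists (V \<times> UNIV)"

definition raag_eq :: "'a set \<Rightarrow> 'a set set \<Rightarrow> ('a word \<times> 'a word) set" where
  "raag_eq V E = ((raag_step E \<union> (raag_step E)\<inverse>) \<inter> (raag_words V \<times> raag_words V))\<^sup>*"

definition raag_class :: "'a set \<Rightarrow> 'a set set \<Rightarrow> 'a word \<Rightarrow> 'a word set" where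
  "raag_class V E w = raag_eq V E `` {w}"

definition RAAG :: "'a set \<Rightarrow> 'a set set \<Rightarrow> 'a word set monoid" where
  "RAAG V E =
    \<lparr>carrier = raag_class V E ` raag_words V,
     monoid.mult = (\<lambda>P Q. raag_class V E ((SOME p. p \<in> P) @ (SOME q. q \<in> Q))),
     one = raag_class V E []\<rparr>"

definition raag_map ::
  "'a set \<Rightarrow> 'a set set \<Rightarrow> 'b set \<Rightarrow> 'b set set \<Rightarrow> ('a \<Rightarrow> 'b) \<Rightarrow> 'a word set \<Rightarrow> 'b word set" where
  "raag_map VL EL VG EG \<phi> Z =
     raag_class VG EG (map (\<lambda>(v, b). (\<phi> v, b)) (SOME z. z \<in> Z))"

definition FD ::
  "'a set \<Rightarrow> 'a set set \<Rightarrow> 'b set \<Rightarrow> 'b set set \<Rightarrow> ('a \<Rightarrow> 'b) \<Rightarrow> ('a word set \<Rightarrow> 'a word set) set" where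
  "FD VL EL VG EG \<phi> =
     {F \<in> auto (RAAG VL EL).
        \<forall>g\<in>carrier (RAAG VL EL). raag_map VL EL VG EG \<phi> (F g) = raag_map VL EL VG EG \<phi> g}"

definition FD_group ::
  "'a set \<Rightarrow> 'a set set \<Rightarrow> 'b set \<Rightarrow> 'b set set \<Rightarrow> ('a \<Rightarrow> 'b) \<Rightarrow> ('a word set \<Rightarrow> 'a word set) monoid" where
  "FD_group VL EL VG EG \<phi> = AutoGroup (RAAG VL EL) \<lparr>carrier := FD VL EL VG EG \<phi>\<rparr>"

text \<open>IA(G) for a group G: automorphisms inducing the identity on the
  abelianization G / [G,G], i.e. fixing every coset [G,G] g.\<close>

definition IA :: "('g, 'c) monoid_scheme \<Rightarrow> ('g \<Rightarrow> 'g) set" where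
  "IA G = {F \<in> auto G. \<forall>g\<in>carrier G.
              derived G (carrier G) #>\<^bsub>G\<^esub> F g = derived G (carrier G) #>\<^bsub>G\<^esub> g}"

end

theory Submission
  imports Defs
begin

(* An automorphism F in FD(\<phi>) acts on H_1(A_\<Lambda>), the free abelian group on the vertices of \<Lambda>;
   let m(u, a) be the exponent sum of a in F(u). Since \<phi>_* F = \<phi>_*, the row m(u, -) sums to 1
   over the fibre of \<phi>(u) and to 0 over every other fibre. Adjacent generators u, v commute, hence
   so do F(u) and F(v), and a Heisenberg quotient of A_\<Lambda> shows that the minors
   m(u, a) m(v, b) - m(u, b) m(v, a) vanish for distinct non-adjacent a, b. Since fibres contain
   no edges and \<phi> is injective on neighbourhoods, every row is then a unit vector e_(\<sigma> u) with
   \<phi>(\<sigma> u) = \<phi>(u), and \<sigma> is a deck transformation. F \<mapsto> \<sigma> is a homomorphism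
   FD(\<phi>) \<rightarrow> Deck(\<phi>) with kernel FD(\<phi>) \<inter> IA(A_\<Lambda>), onto because every deck
   transformation permutes the generators of A_\<Lambda>. *)

section \<open>The right-angled Artin group as a group\<close>

lemma raag_step_append_context:
  assumes "(x, y) \<in> raag_step E"
  shows "(p @ x @ q, p @ y @ q) \<in> raag_step E"
  using assms
proof (cases rule: raag_step.cases)
  case (cancel u a b w)
  then show ?thesis
    using raag_step.cancel[where u = "p @ u" and w = "w @ q" and a = a and b = b and E = E] by simp
next
  case (commute x' y' u w)
  then show ?thesis
    using raag_step.commute[where u = "p @ u" and w = "w @ q" and x = x' and y = y' and E = E]
    by simp
qed

lemma raag_words_simps [simp]:
  "[] \<in> raag_words V"
  "x # w \<in> raag_words V \<longleftrightarrow> fst x \<in> V \<and> w \<in> raag_words V"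
  "w @ w' \<in> raag_words V \<longleftrightarrow> w \<in> raag_words V \<and> w' \<in> raag_words V"
  by (cases x; auto simp: raag_words_def)+

lemma raag_eq_refl [simp]: "(x, x) \<in> raag_eq V E"
  by (simp add: raag_eq_def)

lemma raag_eq_sym:
  assumes "(x, y) \<in> raag_eq V E"
  shows "(y, x) \<in> raag_eq V E"
proof -
  let ?T = "(raag_step E \<union> (raag_step E)\<inverse>) \<inter> (raag_words V \<times> raag_words V)"
  have "?T\<inverse> = ?T" by auto
  moreover have "(y, x) \<in> (?T\<inverse>)\<^sup>*"
    using assms by (simp add: raag_eq_def rtrancl_converse)
  ultimately show ?thesis by (simp add: raag_eq_def)
qed

lemma raag_eq_trans:
  "(x, y) \<in> raag_eq V E \<Longrightarrow> (y, z) \<in> raag_eq V E \<Longrightarrow> (x, z) \<in> raag_eq V E"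
  unfolding raag_eq_def by (rule rtrancl_trans)

lemma raag_step_imp_raag_eq:
  "(x, y) \<in> raag_step E \<Longrightarrow> x \<in> raag_words V \<Longrightarrow> y \<in> raag_words V \<Longrightarrow> (x, y) \<in> raag_eq V E"
  unfolding raag_eq_def by auto

lemma raag_eq_imp_eq_or_words:
  "(x, y) \<in> raag_eq V E \<Longrightarrow> x = y \<or> x \<in> raag_words V \<and> y \<in> raag_words V"
  unfolding raag_eq_def by (induction rule: rtrancl_induct) auto

lemma raag_eq_append_context:
  assumes "(x, y) \<in> raag_eq V E" "p \<in> raag_words V" "q \<in> raag_words V"
  shows "(p @ x @ q, p @ y @ q) \<in> raag_eq V E"
  using assms(1) unfolding raag_eq_def
proof (induction rule: rtrancl_induct)
  case (step y z)
  have "(p @ y @ q, p @ z @ q) \<in> (raag_step E \<union> (raag_step E)\<inverse>) \<inter> (raag_words V \<times> raag_words V)"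
    using step(2) assms(2,3) raag_step_append_context[of _ _ E p q] by auto
  with step(3) show ?case by (rule rtrancl_into_rtrancl)
qed simp

lemma raag_class_eq_iff: "raag_class V E x = raag_class V E y \<longleftrightarrow> (x, y) \<in> raag_eq V E"
  unfolding raag_class_def
  by (auto intro: raag_eq_trans raag_eq_sym)

definition rep :: "'x set \<Rightarrow> 'x" where
  "rep P = (SOME p. p \<in> P)"

lemma raag_eq_rep: "(w, rep (raag_class V E w)) \<in> raag_eq V E"
proof -
  have "w \<in> raag_class V E w" by (simp add: raag_class_def)
  then have "rep (raag_class V E w) \<in> raag_class V E w" unfolding rep_def by (rule someI)
  then show ?thesis by (simp add: raag_class_def)
qed

lemma RAAG_carrier: "carrier (RAAG V E) = raag_class V E ` raag_words V"
  by (simp add: RAAG_def)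

lemma RAAG_one: "\<one>\<^bsub>RAAG V E\<^esub> = raag_class V E []"
  by (simp add: RAAG_def)

lemma raag_class_in_carrier: "w \<in> raag_words V \<Longrightarrow> raag_class V E w \<in> carrier (RAAG V E)"
  by (simp add: RAAG_carrier)

lemma rep_in_raag_words:
  assumes "P \<in> carrier (RAAG V E)"
  shows "rep P \<in> raag_words V"
proof -
  obtain w where "w \<in> raag_words V" "P = raag_class V E w"
    using assms by (auto simp: RAAG_carrier)
  then show ?thesis
    using raag_eq_imp_eq_or_words[OF raag_eq_rep[of w V E]] by auto
qed

lemma RAAG_mult:
  assumes "w \<in> raag_words V" "w' \<in> raag_words V"
  shows "raag_class V E w \<otimes>\<^bsub>RAAG V E\<^esub> raag_class V E w' = raag_class V E (w @ w')"
proof -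
  let ?r = "rep (raag_class V E w)" and ?r' = "rep (raag_class V E w')"
  have "?r' \<in> raag_words V"
    using rep_in_raag_words[OF raag_class_in_carrier[OF assms(2), of E]] .
  then have "(?r @ ?r', w @ ?r') \<in> raag_eq V E"
    using raag_eq_append_context[OF raag_eq_sym[OF raag_eq_rep[of w V E]], of "[]" ?r'] by simp
  moreover have "(w @ ?r', w @ w') \<in> raag_eq V E"
    using raag_eq_append_context[OF raag_eq_sym[OF raag_eq_rep[of w' V E]], of w "[]"] assms by simp
  ultimately show ?thesis
    by (simp add: RAAG_def rep_def[symmetric] raag_class_eq_iff raag_eq_trans[of _ "w @ ?r'"])
qed

definition word_inv :: "'a word \<Rightarrow> 'a word" where
  "word_inv w = rev (map (\<lambda>(a, b). (a, \<not> b)) w)"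

lemma word_inv_simps [simp]:
  "word_inv [] = []"
  "word_inv (x # w) = word_inv w @ [(fst x, \<not> snd x)]"
  by (auto simp: word_inv_def split: prod.splits)

lemma word_inv_in_raag_words [simp]: "word_inv w \<in> raag_words V \<longleftrightarrow> w \<in> raag_words V"
  by (induction w) auto

lemma raag_eq_word_inv_append: "w \<in> raag_words V \<Longrightarrow> (word_inv w @ w, []) \<in> raag_eq V E"
proof (induction w)
  case (Cons x w)
  obtain a b where x: "x = (a, b)" by (cases x)
  have "(word_inv w @ [(a, \<not> b), (a, \<not> \<not> b)] @ w, word_inv w @ w) \<in> raag_step E"
    by (rule raag_step.cancel)
  then have "(word_inv (x # w) @ x # w, word_inv w @ w) \<in> raag_eq V E"
    using Cons.prems x by (auto intro: raag_step_imp_raag_eq)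
  with Cons show ?case by (auto intro: raag_eq_trans)
qed simp

lemma RAAG_group: "group (RAAG V E)"
proof (rule groupI)
  fix x y z
  assume "x \<in> carrier (RAAG V E)" "y \<in> carrier (RAAG V E)" "z \<in> carrier (RAAG V E)"
  then show "x \<otimes>\<^bsub>RAAG V E\<^esub> y \<in> carrier (RAAG V E)"
    and "x \<otimes>\<^bsub>RAAG V E\<^esub> y \<otimes>\<^bsub>RAAG V E\<^esub> z = x \<otimes>\<^bsub>RAAG V E\<^esub> (y \<otimes>\<^bsub>RAAG V E\<^esub> z)"
    by (auto simp: RAAG_carrier RAAG_mult)
next
  fix x
  assume "x \<in> carrier (RAAG V E)"
  then obtain w where w: "w \<in> raag_words V" "x = raag_class V E w"
    by (auto simp: RAAG_carrier)
  then show "\<one>\<^bsub>RAAG V E\<^esub> \<otimes>\<^bsub>RAAG V E\<^esub> x = x"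
    by (simp add: RAAG_mult RAAG_one)
  show "\<exists>y\<in>carrier (RAAG V E). y \<otimes>\<^bsub>RAAG V E\<^esub> x = \<one>\<^bsub>RAAG V E\<^esub>"
    using w by (intro bexI[of _ "raag_class V E (word_inv w)"])
      (simp_all add: raag_class_in_carrier RAAG_mult RAAG_one raag_class_eq_iff
        raag_eq_word_inv_append)
qed (simp add: RAAG_carrier RAAG_one)

definition raag_gen :: "'a set \<Rightarrow> 'a set set \<Rightarrow> 'a \<Rightarrow> 'a word set" where
  "raag_gen V E u = raag_class V E [(u, False)]"

lemma raag_gen_in_carrier: "u \<in> V \<Longrightarrow> raag_gen V E u \<in> carrier (RAAG V E)"
  by (simp add: raag_gen_def RAAG_carrier)

lemma raag_class_letter:
  assumes "a \<in> V"
  shows "raag_class V E [(a, b)] = (if b then inv\<^bsub>RAAG V E\<^esub> raag_gen V E a else raag_gen V E a)"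
proof -
  interpret group "RAAG V E" by (rule RAAG_group)
  have "([] @ [(a, True), (a, \<not> True)] @ [], [] @ []) \<in> raag_step E"
    by (rule raag_step.cancel)
  then have "raag_class V E [(a, True)] \<otimes>\<^bsub>RAAG V E\<^esub> raag_gen V E a = \<one>\<^bsub>RAAG V E\<^esub>"
    using assms by (auto simp: raag_gen_def RAAG_mult RAAG_one raag_class_eq_iff
        intro: raag_step_imp_raag_eq)
  then have "raag_class V E [(a, True)] = inv\<^bsub>RAAG V E\<^esub> raag_gen V E a"
    using assms
    by (intro inv_equality[symmetric] raag_class_in_carrier raag_gen_in_carrier) simp_all
  then show ?thesis by (cases b) (simp_all add: raag_gen_def)
qed

lemma raag_gen_commute:
  assumes "{u, v} \<in> E" "u \<in> V" "v \<in> V"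
  shows "raag_gen V E u \<otimes>\<^bsub>RAAG V E\<^esub> raag_gen V E v = raag_gen V E v \<otimes>\<^bsub>RAAG V E\<^esub> raag_gen V E u"
proof -
  have "([] @ [(u, False), (v, False)] @ [], [] @ [(v, False), (u, False)] @ []) \<in> raag_step E"
    using assms by (intro raag_step.commute) simp
  then show ?thesis
    using assms by (simp add: raag_gen_def RAAG_mult raag_class_eq_iff raag_step_imp_raag_eq)
qed

section \<open>Exponent sums and the abelianization\<close>

definition letter_sign :: "bool \<Rightarrow> int" where
  "letter_sign b = (if b then -1 else 1)"

definition exp_sum :: "'a \<Rightarrow> 'a word \<Rightarrow> int" where
  "exp_sum a w = (\<Sum>l\<leftarrow>w. if fst l = a then letter_sign (snd l) else 0)"

lemma exp_sum_simps [simp]: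
  "exp_sum a [] = 0"
  "exp_sum a (l # w) = (if fst l = a then letter_sign (snd l) else 0) + exp_sum a w"
  "exp_sum a (w @ w') = exp_sum a w + exp_sum a w'"
  by (simp_all add: exp_sum_def)

lemma exp_sum_raag_step: "(x, y) \<in> raag_step E \<Longrightarrow> exp_sum a x = exp_sum a y"
  by (induction rule: raag_step.induct) (auto simp: letter_sign_def)

lemma exp_sum_raag_eq: "(x, y) \<in> raag_eq V E \<Longrightarrow> exp_sum a x = exp_sum a y"
  unfolding raag_eq_def
  by (induction rule: rtrancl_induct) (auto dest: exp_sum_raag_step[where a = a])

lemma exp_sum_not_in_vertices: "w \<in> raag_words V \<Longrightarrow> a \<notin> V \<Longrightarrow> exp_sum a w = 0"
  by (induction w) auto

definition raag_exp :: "'a \<Rightarrow> 'a word set \<Rightarrow> int" where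
  "raag_exp a P = exp_sum a (rep P)"

lemma raag_exp_class [simp]: "raag_exp a (raag_class V E w) = exp_sum a w"
  unfolding raag_exp_def using exp_sum_raag_eq[OF raag_eq_rep[of w V E]] by simp

lemma raag_exp_gen [simp]: "raag_exp a (raag_gen V E u) = (if a = u then 1 else 0)"
  by (auto simp: raag_gen_def letter_sign_def)

lemma raag_exp_one [simp]: "raag_exp a \<one>\<^bsub>RAAG V E\<^esub> = 0"
  by (simp add: RAAG_one)

lemma raag_exp_not_in_vertices:
  "P \<in> carrier (RAAG V E) \<Longrightarrow> a \<notin> V \<Longrightarrow> raag_exp a P = 0"
  by (auto simp: RAAG_carrier exp_sum_not_in_vertices)

lemma raag_exp_mult:
  "P \<in> carrier (RAAG V E) \<Longrightarrow> Q \<in> carrier (RAAG V E) \<Longrightarrow>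
    raag_exp a (P \<otimes>\<^bsub>RAAG V E\<^esub> Q) = raag_exp a P + raag_exp a Q"
  by (auto simp: RAAG_carrier RAAG_mult)

lemma raag_exp_inv:
  assumes "P \<in> carrier (RAAG V E)"
  shows "raag_exp a (inv\<^bsub>RAAG V E\<^esub> P) = - raag_exp a P"
proof -
  interpret group "RAAG V E" by (rule RAAG_group)
  have "raag_exp a (inv\<^bsub>RAAG V E\<^esub> P \<otimes>\<^bsub>RAAG V E\<^esub> P) = 0"
    using assms by simp
  then show ?thesis
    using assms raag_exp_mult[of "inv\<^bsub>RAAG V E\<^esub> P" V E P a] by simp
qed

lemma raag_exp_commutator:
  assumes "P \<in> carrier (RAAG V E)" "Q \<in> carrier (RAAG V E)"
  shows "raag_exp a (P \<otimes>\<^bsub>RAAG V E\<^esub> Q \<otimes>\<^bsub>RAAG V E\<^esub> inv\<^bsub>RAAG V E\<^esub> P \<otimes>\<^bsub>RAAG V E\<^esub> inv\<^bsub>RAAG V E\<^esub> Q) = 0"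
proof -
  interpret group "RAAG V E" by (rule RAAG_group)
  show ?thesis using assms by (simp add: raag_exp_mult raag_exp_inv)
qed

lemma raag_exp_derived:
  assumes "P \<in> derived (RAAG V E) (carrier (RAAG V E))"
  shows "raag_exp a P = 0"
  using assms unfolding derived_def
proof (induction rule: generate.induct)
  case (eng h1 h2)
  interpret group "RAAG V E" by (rule RAAG_group)
  have "h1 \<in> carrier (RAAG V E)" "h2 \<in> carrier (RAAG V E)"
    using eng(1,2) derived_in_carrier[of "carrier (RAAG V E)"] unfolding derived_def by auto
  with eng show ?case by (simp add: raag_exp_mult)
next
  case (inv h)
  interpret group "RAAG V E" by (rule RAAG_group)
  from inv show ?case by (auto simp: raag_exp_inv raag_exp_commutator)
qed (auto simp: raag_exp_commutator)

lemma exp_sum_nonneg_if_no_inverse_letter: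
  "(a, \<not> b) \<notin> set w \<Longrightarrow> letter_sign b * exp_sum a w \<ge> 0"
  by (induction w) (auto simp: letter_sign_def)

text \<open>A nonempty word with all exponent sums zero has the form x c1 x\<inverse> c2 for a letter x, and
  x c1 x\<inverse> c2 = [x, c1] c1 c2 where c1 c2 is a shorter such word.\<close>

lemma derived_if_exp_sums_zero:
  assumes "w \<in> raag_words V" "\<forall>a. exp_sum a w = 0"
  shows "raag_class V E w \<in> derived (RAAG V E) (carrier (RAAG V E))"
  using assms
proof (induction w rule: length_induct)
  case (1 w)
  interpret group "RAAG V E" by (rule RAAG_group)
  let ?D = "derived (RAAG V E) (carrier (RAAG V E))"
  have sub: "subgroup ?D (RAAG V E)" by (rule derived_is_subgroup) simp
  show ?case
  proof (cases w)
    case Nil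
    then show ?thesis using subgroup.one_closed[OF sub] by (simp add: RAAG_one)
  next
    case (Cons l w')
    obtain a b where l: "l = (a, b)" by (cases l)
    have "(a, \<not> b) \<in> set w'"
    proof (rule ccontr)
      assume "(a, \<not> b) \<notin> set w'"
      then have "letter_sign b * exp_sum a w' \<ge> 0" by (rule exp_sum_nonneg_if_no_inverse_letter)
      moreover have "exp_sum a w = 0" using 1 by simp
      ultimately show False using Cons l by (simp add: letter_sign_def split: if_splits)
    qed
    then obtain w1 w2 where w': "w' = w1 @ (a, \<not> b) # w2" by (auto dest: split_list)
    have aV: "a \<in> V" and w12: "w1 \<in> raag_words V" "w2 \<in> raag_words V"
      using 1(2) Cons l w' by auto
    define x where "x = raag_class V E [(a, b)]"
    define c1 where "c1 = raag_class V E w1"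
    define c2 where "c2 = raag_class V E w2"
    have carrier: "x \<in> carrier (RAAG V E)" "c1 \<in> carrier (RAAG V E)" "c2 \<in> carrier (RAAG V E)"
      using aV w12 by (auto simp: x_def c1_def c2_def intro: raag_class_in_carrier)
    have "inv\<^bsub>RAAG V E\<^esub> x = raag_class V E [(a, \<not> b)]"
      using aV by (cases b) (simp_all add: x_def raag_class_letter raag_gen_in_carrier)
    then have "raag_class V E w = x \<otimes>\<^bsub>RAAG V E\<^esub> (c1 \<otimes>\<^bsub>RAAG V E\<^esub> (inv\<^bsub>RAAG V E\<^esub> x \<otimes>\<^bsub>RAAG V E\<^esub> c2))"
      using aV w12 by (simp add: x_def c1_def c2_def RAAG_mult Cons l w')
    also have "\<dots> = (x \<otimes>\<^bsub>RAAG V E\<^esub> c1 \<otimes>\<^bsub>RAAG V E\<^esub> inv\<^bsub>RAAG V E\<^esub> x \<otimes>\<^bsub>RAAG V E\<^esub> inv\<^bsub>RAAG V E\<^esub> c1)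
        \<otimes>\<^bsub>RAAG V E\<^esub> (c1 \<otimes>\<^bsub>RAAG V E\<^esub> c2)"
    proof -
      have "inv\<^bsub>RAAG V E\<^esub> c1 \<otimes>\<^bsub>RAAG V E\<^esub> (c1 \<otimes>\<^bsub>RAAG V E\<^esub> c2) = c2"
        using carrier by (simp add: m_assoc[symmetric])
      with carrier show ?thesis by (simp add: m_assoc)
    qed
    finally have w_eq: "raag_class V E w = \<dots>" .
    have "x \<otimes>\<^bsub>RAAG V E\<^esub> c1 \<otimes>\<^bsub>RAAG V E\<^esub> inv\<^bsub>RAAG V E\<^esub> x \<otimes>\<^bsub>RAAG V E\<^esub> inv\<^bsub>RAAG V E\<^esub> c1 \<in> ?D"
      unfolding derived_def using carrier by (intro generate.incl) blast
    moreover have "c1 \<otimes>\<^bsub>RAAG V E\<^esub> c2 \<in> ?D"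
    proof -
      have "exp_sum a' (w1 @ w2) = 0" for a'
        using 1(3) Cons l w' by (auto simp: letter_sign_def split: if_splits)
      then have "raag_class V E (w1 @ w2) \<in> ?D"
        using 1(1) w12 Cons w' by simp
      then show ?thesis using w12 by (simp add: c1_def c2_def RAAG_mult)
    qed
    ultimately show ?thesis using w_eq subgroup.m_closed[OF sub] by metis
  qed
qed

lemma derived_iff_raag_exp_zero:
  assumes "P \<in> carrier (RAAG V E)"
  shows "P \<in> derived (RAAG V E) (carrier (RAAG V E)) \<longleftrightarrow> (\<forall>a. raag_exp a P = 0)"
  using assms raag_exp_derived derived_if_exp_sums_zero by (fastforce simp: RAAG_carrier)

lemma IA_iff_preserves_raag_exp:
  assumes "F \<in> auto (RAAG V E)"
  shows "F \<in> IA (RAAG V E) \<longleftrightarrow> (\<forall>g\<in>carrier (RAAG V E). \<forall>a. raag_exp a (F g) = raag_exp a g)"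
proof -
  interpret group "RAAG V E" by (rule RAAG_group)
  let ?D = "derived (RAAG V E) (carrier (RAAG V E))"
  have sub: "subgroup ?D (RAAG V E)" by (rule derived_is_subgroup) simp
  have coset_eq: "?D #>\<^bsub>RAAG V E\<^esub> x = ?D #>\<^bsub>RAAG V E\<^esub> y \<longleftrightarrow> x \<otimes>\<^bsub>RAAG V E\<^esub> inv\<^bsub>RAAG V E\<^esub> y \<in> ?D"
    if "x \<in> carrier (RAAG V E)" "y \<in> carrier (RAAG V E)" for x y
  proof
    assume "?D #>\<^bsub>RAAG V E\<^esub> x = ?D #>\<^bsub>RAAG V E\<^esub> y"
    then have "x \<in> ?D #>\<^bsub>RAAG V E\<^esub> y" using rcos_self[OF that(1) sub] by simp
    then show "x \<otimes>\<^bsub>RAAG V E\<^esub> inv\<^bsub>RAAG V E\<^esub> y \<in> ?D"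
      using subgroup.rcos_module_imp[OF sub is_group that(2)] by blast
  next
    assume "x \<otimes>\<^bsub>RAAG V E\<^esub> inv\<^bsub>RAAG V E\<^esub> y \<in> ?D"
    then have "x \<in> ?D #>\<^bsub>RAAG V E\<^esub> y"
      using subgroup.rcos_module_rev[OF sub is_group that(2,1)] by blast
    then show "?D #>\<^bsub>RAAG V E\<^esub> x = ?D #>\<^bsub>RAAG V E\<^esub> y"
      using repr_independence[OF _ that(2) sub] by simp
  qed
  have "F g \<in> carrier (RAAG V E)" if "g \<in> carrier (RAAG V E)" for g
    using assms that by (auto simp: auto_def hom_def)
  then have "?D #>\<^bsub>RAAG V E\<^esub> F g = ?D #>\<^bsub>RAAG V E\<^esub> g \<longleftrightarrow> (\<forall>a. raag_exp a (F g) = raag_exp a g)"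
    if "g \<in> carrier (RAAG V E)" for g
    using that by (simp add: coset_eq derived_iff_raag_exp_zero raag_exp_mult raag_exp_inv)
  then show ?thesis using assms unfolding IA_def by auto
qed

section \<open>A Heisenberg quotient detecting commutation\<close>

text \<open>For non-adjacent vertices a and b, sending a and b to the two standard generators of the
  integral Heisenberg group and all other vertices to 1 is well defined on the RAAG. Since the
  commutator in the Heisenberg group records the determinant of the exponent sums in a and b,
  commuting elements have proportional (a, b)-exponent vectors.\<close>

fun heis_mult :: "int \<times> int \<times> int \<Rightarrow> int \<times> int \<times> int \<Rightarrow> int \<times> int \<times> int" where
  "heis_mult (p, q, r) (p', q', r') = (p + p', q + q', r + r' + p * q')"

lemma heis_mult_assoc: "heis_mult (heis_mult x y) z = heis_mult x (heis_mult y z)"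
  by (cases x; cases y; cases z) (simp add: algebra_simps)

lemma heis_mult_zero [simp]: "heis_mult (0, 0, 0) x = x" "heis_mult x (0, 0, 0) = x"
  by (cases x; simp)+

definition heis_letter :: "'a \<Rightarrow> 'a \<Rightarrow> 'a \<times> bool \<Rightarrow> int \<times> int \<times> int" where
  "heis_letter a b l =
    (if fst l = a then (letter_sign (snd l), 0, 0)
     else if fst l = b then (0, letter_sign (snd l), 0) else (0, 0, 0))"

definition heis_word :: "'a \<Rightarrow> 'a \<Rightarrow> 'a word \<Rightarrow> int \<times> int \<times> int" where
  "heis_word a b w = foldr (\<lambda>l. heis_mult (heis_letter a b l)) w (0, 0, 0)"

lemma heis_word_simps [simp]:
  "heis_word a b [] = (0, 0, 0)"
  "heis_word a b (l # w) = heis_mult (heis_letter a b l) (heis_word a b w)"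
  by (simp_all add: heis_word_def)

lemma heis_word_append: "heis_word a b (w @ w') = heis_mult (heis_word a b w) (heis_word a b w')"
  by (induction w) (auto simp: heis_mult_assoc)

lemma heis_word_exp_sums:
  assumes "a \<noteq> b"
  shows "fst (heis_word a b w) = exp_sum a w \<and> fst (snd (heis_word a b w)) = exp_sum b w"
proof (induction w)
  case (Cons l w)
  then show ?case
    using assms by (cases "heis_word a b w") (auto simp: heis_letter_def)
qed simp

lemma heis_word_raag_step:
  assumes "(x, y) \<in> raag_step E" "{a, b} \<notin> E"
  shows "heis_word a b x = heis_word a b y"
  using assms(1)
proof (cases rule: raag_step.cases)
  case (cancel u c d w)
  have "heis_mult (heis_letter a b (c, d)) (heis_letter a b (c, \<not> d)) = (0, 0, 0)"
    by (auto simp: heis_letter_def letter_sign_def)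
  then have "heis_mult (heis_letter a b (c, d))
      (heis_mult (heis_letter a b (c, \<not> d)) (heis_word a b w)) = heis_word a b w"
    by (metis heis_mult_assoc heis_mult_zero(1))
  with cancel show ?thesis by (simp add: heis_word_append)
next
  case (commute x' y' u w)
  have "heis_mult (heis_letter a b x') (heis_letter a b y')
      = heis_mult (heis_letter a b y') (heis_letter a b x')"
    using commute(3) assms(2) by (auto simp: heis_letter_def insert_commute)
  then have "heis_mult (heis_letter a b x') (heis_mult (heis_letter a b y') (heis_word a b w))
      = heis_mult (heis_letter a b y') (heis_mult (heis_letter a b x') (heis_word a b w))"
    by (metis heis_mult_assoc)
  with commute show ?thesis by (simp add: heis_word_append)
qed

lemma heis_word_raag_eq:
  assumes "(x, y) \<in> raag_eq V E" "{a, b} \<notin> E"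
  shows "heis_word a b x = heis_word a b y"
  using assms(1) unfolding raag_eq_def
proof (induction rule: rtrancl_induct)
  case (step y z)
  then show ?case
    using heis_word_raag_step[OF _ assms(2), of y z] heis_word_raag_step[OF _ assms(2), of z y]
    by auto
qed simp

lemma raag_exp_minor_eq_if_commute:
  assumes "P \<in> carrier (RAAG V E)" "Q \<in> carrier (RAAG V E)"
    and "P \<otimes>\<^bsub>RAAG V E\<^esub> Q = Q \<otimes>\<^bsub>RAAG V E\<^esub> P"
    and "a \<noteq> b" "{a, b} \<notin> E"
  shows "raag_exp a P * raag_exp b Q = raag_exp a Q * raag_exp b P"
proof -
  let ?p = "rep P" and ?q = "rep Q"
  have "(?p @ ?q, ?q @ ?p) \<in> raag_eq V E"
    using assms(3) by (simp add: RAAG_def rep_def[symmetric] raag_class_eq_iff)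
  then have "heis_word a b (?p @ ?q) = heis_word a b (?q @ ?p)"
    by (rule heis_word_raag_eq[OF _ assms(5)])
  then have "heis_mult (heis_word a b ?p) (heis_word a b ?q)
      = heis_mult (heis_word a b ?q) (heis_word a b ?p)"
    by (simp only: heis_word_append)
  moreover obtain p3 q3 where
    "heis_word a b ?p = (raag_exp a P, raag_exp b P, p3)"
    "heis_word a b ?q = (raag_exp a Q, raag_exp b Q, q3)"
    using heis_word_exp_sums[OF assms(4)] by (metis prod.collapse raag_exp_def)
  ultimately show ?thesis by simp
qed

section \<open>Homomorphisms induced by simplicial maps\<close>

definition simplicial_map :: "'a set \<Rightarrow> 'a set set \<Rightarrow> 'b set \<Rightarrow> 'b set set \<Rightarrow> ('a \<Rightarrow> 'b) \<Rightarrow> bool" where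
  "simplicial_map V E V' E' f \<longleftrightarrow> f \<in> V \<rightarrow> V' \<and> (\<forall>u\<in>V. \<forall>v\<in>V. {u, v} \<in> E \<longrightarrow> {f u, f v} \<in> E')"

definition map_word :: "('a \<Rightarrow> 'b) \<Rightarrow> 'a word \<Rightarrow> 'b word" where
  "map_word f = map (\<lambda>(v, b). (f v, b))"

lemma map_word_simps [simp]:
  "map_word f [] = []"
  "map_word f (l # w) = (f (fst l), snd l) # map_word f w"
  "map_word f (w @ w') = map_word f w @ map_word f w'"
  by (auto simp: map_word_def split: prod.splits)

lemma map_word_in_raag_words: "f \<in> V \<rightarrow> V' \<Longrightarrow> w \<in> raag_words V \<Longrightarrow> map_word f w \<in> raag_words V'"
  by (induction w) auto

lemma map_word_cong: "w \<in> raag_words V \<Longrightarrow> (\<And>v. v \<in> V \<Longrightarrow> f v = g v) \<Longrightarrow> map_word f w = map_word g w"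
  by (induction w) auto

lemma map_word_map_word: "map_word f (map_word g w) = map_word (f \<circ> g) w"
  by (induction w) auto

lemma exp_sum_map_word:
  assumes "w \<in> raag_words V" "finite V"
  shows "exp_sum x (map_word f w) = (\<Sum>a\<in>{a\<in>V. f a = x}. exp_sum a w)"
  using assms(1)
proof (induction w)
  case (Cons l w)
  have "finite {a\<in>V. f a = x}" using assms(2) by simp
  with Cons show ?case by (simp add: sum.distrib sum.delta)
qed simp

lemma map_word_raag_step:
  assumes "(x, y) \<in> raag_step E" "x \<in> raag_words V" "simplicial_map V E V' E' f"
  shows "(map_word f x, map_word f y) \<in> raag_step E'"
  using assms(1)
proof (cases rule: raag_step.cases)
  case (cancel u c d w)
  then show ?thesis
    using raag_step.cancel[of "map_word f u" "f c" d "map_word f w" E'] by simp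
next
  case (commute x' y' u w)
  then have "{fst (f (fst x'), snd x'), fst (f (fst y'), snd y')} \<in> E'"
    using assms(2,3) by (simp add: simplicial_map_def)
  with commute show ?thesis
    using raag_step.commute[of "(f (fst x'), snd x')" "(f (fst y'), snd y')" E'
        "map_word f u" "map_word f w"]
    by simp
qed

lemma map_word_raag_eq:
  assumes "(x, y) \<in> raag_eq V E" "simplicial_map V E V' E' f"
  shows "(map_word f x, map_word f y) \<in> raag_eq V' E'"
  using assms(1) unfolding raag_eq_def
proof (induction rule: rtrancl_induct)
  case (step y z)
  have fV: "f \<in> V \<rightarrow> V'" using assms(2) by (simp add: simplicial_map_def)
  from step(2) have "(map_word f y, map_word f z)
      \<in> (raag_step E' \<union> (raag_step E')\<inverse>) \<inter> (raag_words V' \<times> raag_words V')"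
    using map_word_raag_step[OF _ _ assms(2)] map_word_in_raag_words[OF fV] by auto
  with step(3) show ?case by (rule rtrancl_into_rtrancl)
qed simp

lemma raag_map_class:
  assumes "simplicial_map V E V' E' f" "w \<in> raag_words V"
  shows "raag_map V E V' E' f (raag_class V E w) = raag_class V' E' (map_word f w)"
proof -
  have "(map_word f w, map_word f (rep (raag_class V E w))) \<in> raag_eq V' E'"
    by (rule map_word_raag_eq[OF raag_eq_rep assms(1)])
  then show ?thesis
    by (simp add: raag_map_def map_word_def[symmetric] rep_def[symmetric]
        raag_class_eq_iff raag_eq_sym)
qed

lemma raag_map_hom:
  assumes "simplicial_map V E V' E' f"
  shows "raag_map V E V' E' f \<in> hom (RAAG V E) (RAAG V' E')"
proof (rule homI)
  have fV: "f \<in> V \<rightarrow> V'" using assms by (simp add: simplicial_map_def)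
  fix P Q
  assume "P \<in> carrier (RAAG V E)" "Q \<in> carrier (RAAG V E)"
  then obtain w w' where "w \<in> raag_words V" "P = raag_class V E w"
    and "w' \<in> raag_words V" "Q = raag_class V E w'"
    by (auto simp: RAAG_carrier)
  then show "raag_map V E V' E' f P \<in> carrier (RAAG V' E')"
    and "raag_map V E V' E' f (P \<otimes>\<^bsub>RAAG V E\<^esub> Q) =
      raag_map V E V' E' f P \<otimes>\<^bsub>RAAG V' E'\<^esub> raag_map V E V' E' f Q"
    using map_word_in_raag_words[OF fV]
    by (simp_all add: raag_map_class[OF assms] RAAG_mult raag_class_in_carrier)
qed

lemma raag_exp_raag_map:
  assumes "simplicial_map V E V' E' f" "finite V" "P \<in> carrier (RAAG V E)"
  shows "raag_exp x (raag_map V E V' E' f P) = (\<Sum>a\<in>{a\<in>V. f a = x}. raag_exp a P)"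
  using assms(3)
  by (auto simp: RAAG_carrier raag_map_class[OF assms(1)] exp_sum_map_word[OF _ assms(2)])

lemma raag_exp_hom_apply:
  assumes "F \<in> hom (RAAG V E) (RAAG V' E')" "finite V" "P \<in> carrier (RAAG V E)"
  shows "raag_exp a (F P) = (\<Sum>b\<in>V. raag_exp b P * raag_exp a (F (raag_gen V E b)))"
proof -
  interpret h: group_hom "RAAG V E" "RAAG V' E'" F
    using assms(1) RAAG_group[of V E] RAAG_group[of V' E']
    by (auto simp: group_hom_def group_hom_axioms_def)
  have "raag_exp a (F (raag_class V E w)) = (\<Sum>b\<in>V. exp_sum b w * raag_exp a (F (raag_gen V E b)))"
    if "w \<in> raag_words V" for w
    using that
  proof (induction w)
    case Nil
    show ?case by (simp add: RAAG_one[symmetric])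
  next
    case (Cons l w)
    obtain c d where l: "l = (c, d)" by (cases l)
    have c: "c \<in> V" and w: "w \<in> raag_words V" using Cons.prems l by auto
    have "F (raag_class V E (l # w)) = F (raag_class V E [l]) \<otimes>\<^bsub>RAAG V' E'\<^esub> F (raag_class V E w)"
      using c w l RAAG_mult[of "[l]" V w E] h.hom_mult[of "raag_class V E [l]" "raag_class V E w"]
      by (simp add: raag_class_in_carrier)
    moreover have
      "raag_exp a (F (raag_class V E [l])) = letter_sign d * raag_exp a (F (raag_gen V E c))"
      using c by (cases d) (simp_all add: l raag_class_letter h.hom_inv raag_exp_inv
          raag_gen_in_carrier letter_sign_def)
    ultimately have "raag_exp a (F (raag_class V E (l # w)))
        = letter_sign d * raag_exp a (F (raag_gen V E c))
          + (\<Sum>b\<in>V. exp_sum b w * raag_exp a (F (raag_gen V E b)))"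
      using Cons.IH[OF w] c w l by (simp add: raag_exp_mult raag_class_in_carrier)
    then show ?case
      using c assms(2)
      by (simp add: l distrib_right sum.distrib if_distrib[of "\<lambda>x. x * _"] sum.delta
          cong: if_cong)
  qed
  then show ?thesis using assms(3) by (auto simp: RAAG_carrier)
qed

section \<open>The groups FD and Deck\<close>

lemma subgroup_BijGroup_invariant:
  assumes "subgroup H (BijGroup S)"
  shows "subgroup {f \<in> H. \<forall>x\<in>S. h (f x) = h x} (BijGroup S)"
proof -
  interpret B: group "BijGroup S" by (rule group_BijGroup)
  have H_Bij: "H \<subseteq> Bij S" using subgroup.subset[OF assms] by (simp add: BijGroup_def)
  show ?thesis
  proof (rule B.subgroupI)
    show "{f \<in> H. \<forall>x\<in>S. h (f x) = h x} \<subseteq> carrier (BijGroup S)"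
      using subgroup.subset[OF assms] by auto
    have "\<one>\<^bsub>BijGroup S\<^esub> \<in> H" by (rule subgroup.one_closed[OF assms])
    then show "{f \<in> H. \<forall>x\<in>S. h (f x) = h x} \<noteq> {}" by (force simp: BijGroup_def)
  next
    fix f assume f: "f \<in> {f \<in> H. \<forall>x\<in>S. h (f x) = h x}"
    then have bij: "bij_betw f S S" using H_Bij by (auto simp: Bij_def)
    have "h (inv_into S f x) = h x" if "x \<in> S" for x
    proof -
      have "inv_into S f x \<in> S" using bij_betw_apply[OF bij_betw_inv_into[OF bij] that] .
      then have "h (f (inv_into S f x)) = h (inv_into S f x)" using f by blast
      then show ?thesis using bij_betw_inv_into_right[OF bij that] by simp
    qed
    then show "inv\<^bsub>BijGroup S\<^esub> f \<in> {f \<in> H. \<forall>x\<in>S. h (f x) = h x}"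
      using f H_Bij subgroup.m_inv_closed[OF assms] by (auto simp: inv_BijGroup)
  next
    fix f g
    assume "f \<in> {f \<in> H. \<forall>x\<in>S. h (f x) = h x}" "g \<in> {f \<in> H. \<forall>x\<in>S. h (f x) = h x}"
    with H_Bij show "f \<otimes>\<^bsub>BijGroup S\<^esub> g \<in> {f \<in> H. \<forall>x\<in>S. h (f x) = h x}"
      using subgroup.m_closed[OF assms]
      by (auto simp: BijGroup_def compose_def Bij_def bij_betw_apply)
  qed
qed

lemma subgroup_graph_auts: "subgroup (graph_auts V E) (BijGroup V)"
proof -
  interpret B: group "BijGroup V" by (rule group_BijGroup)
  show ?thesis
  proof (rule B.subgroupI)
    show "graph_auts V E \<subseteq> carrier (BijGroup V)"
      by (auto simp: graph_auts_def BijGroup_def)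
    show "graph_auts V E \<noteq> {}"
      using id_Bij by (force simp: graph_auts_def)
  next
    fix \<mu> assume \<mu>: "\<mu> \<in> graph_auts V E"
    then have bij: "bij_betw \<mu> V V" and B: "\<mu> \<in> Bij V" by (auto simp: graph_auts_def Bij_def)
    have "{inv_into V \<mu> u, inv_into V \<mu> v} \<in> E \<longleftrightarrow> {u, v} \<in> E" if "u \<in> V" "v \<in> V" for u v
    proof -
      have "inv_into V \<mu> u \<in> V" "inv_into V \<mu> v \<in> V"
        using that bij_betw_apply[OF bij_betw_inv_into[OF bij]] by auto
      then have "{\<mu> (inv_into V \<mu> u), \<mu> (inv_into V \<mu> v)} \<in> E
          \<longleftrightarrow> {inv_into V \<mu> u, inv_into V \<mu> v} \<in> E"
        using \<mu> by (simp add: graph_auts_def)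
      then show ?thesis using that bij_betw_inv_into_right[OF bij] by simp
    qed
    then show "inv\<^bsub>BijGroup V\<^esub> \<mu> \<in> graph_auts V E"
      using B restrict_inv_into_Bij[OF B] by (simp add: inv_BijGroup graph_auts_def)
  next
    fix \<mu> \<nu> assume "\<mu> \<in> graph_auts V E" "\<nu> \<in> graph_auts V E"
    then have "\<mu> \<in> Bij V" "\<nu> \<in> Bij V"
      and "\<forall>u\<in>V. \<forall>v\<in>V. {\<mu> u, \<mu> v} \<in> E \<longleftrightarrow> {u, v} \<in> E"
      and "\<forall>u\<in>V. \<forall>v\<in>V. {\<nu> u, \<nu> v} \<in> E \<longleftrightarrow> {u, v} \<in> E"
      by (auto simp: graph_auts_def)
    moreover have "\<nu> u \<in> V" if "u \<in> V" for u
      using Bij_imp_funcset[OF \<open>\<nu> \<in> Bij V\<close>] that by auto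
    ultimately show "\<mu> \<otimes>\<^bsub>BijGroup V\<^esub> \<nu> \<in> graph_auts V E"
      using compose_Bij[of \<mu> V \<nu>] by (simp add: graph_auts_def BijGroup_def compose_def)
  qed
qed

lemma subgroup_FD: "subgroup (FD VL EL VG EG \<phi>) (BijGroup (carrier (RAAG VL EL)))"
  unfolding FD_def
  by (intro subgroup_BijGroup_invariant group.subgroup_auto RAAG_group)

lemma FD_group_eq:
  "FD_group VL EL VG EG \<phi> = BijGroup (carrier (RAAG VL EL))\<lparr>carrier := FD VL EL VG EG \<phi>\<rparr>"
  by (simp add: FD_group_def AutoGroup_def)

lemma group_FD_group: "group (FD_group VL EL VG EG \<phi>)"
  unfolding FD_group_eq by (rule subgroup.subgroup_is_group[OF subgroup_FD group_BijGroup])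

lemma FD_group_carrier [simp]: "carrier (FD_group VL EL VG EG \<phi>) = FD VL EL VG EG \<phi>"
  by (simp add: FD_group_eq)

lemma FD_group_one [simp]: "\<one>\<^bsub>FD_group VL EL VG EG \<phi>\<^esub> = (\<lambda>P\<in>carrier (RAAG VL EL). P)"
  by (simp add: FD_group_eq BijGroup_def)

lemma FD_group_mult [simp]:
  assumes "F \<in> FD VL EL VG EG \<phi>" "F' \<in> FD VL EL VG EG \<phi>"
  shows "F \<otimes>\<^bsub>FD_group VL EL VG EG \<phi>\<^esub> F' = compose (carrier (RAAG VL EL)) F F'"
  using assms by (simp add: FD_group_eq BijGroup_def FD_def auto_def)

lemma subgroup_deck: "subgroup (deck VL EL \<phi>) (BijGroup VL)"
  unfolding deck_def by (rule subgroup_BijGroup_invariant[OF subgroup_graph_auts])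

lemma group_deck_group: "group (deck_group VL EL \<phi>)"
  unfolding deck_group_def by (rule subgroup.subgroup_is_group[OF subgroup_deck group_BijGroup])

lemma deck_group_carrier [simp]: "carrier (deck_group VL EL \<phi>) = deck VL EL \<phi>"
  by (simp add: deck_group_def)

lemma deck_group_one [simp]: "\<one>\<^bsub>deck_group VL EL \<phi>\<^esub> = (\<lambda>u\<in>VL. u)"
  by (simp add: deck_group_def BijGroup_def)

lemma deck_group_mult [simp]:
  assumes "\<mu> \<in> deck VL EL \<phi>" "\<nu> \<in> deck VL EL \<phi>"
  shows "\<mu> \<otimes>\<^bsub>deck_group VL EL \<phi>\<^esub> \<nu> = compose VL \<mu> \<nu>"
  using assms by (simp add: deck_group_def BijGroup_def deck_def graph_auts_def)

definition induced_aut :: "'a set \<Rightarrow> 'a set set \<Rightarrow> ('a \<Rightarrow> 'a) \<Rightarrow> 'a word set \<Rightarrow> 'a word set" where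
  "induced_aut V E \<mu> = restrict (raag_map V E V E \<mu>) (carrier (RAAG V E))"

lemma simplicial_map_graph_aut: "\<mu> \<in> graph_auts V E \<Longrightarrow> simplicial_map V E V E \<mu>"
  by (auto simp: graph_auts_def simplicial_map_def Bij_def bij_betw_apply)

lemma induced_aut_class:
  "\<mu> \<in> graph_auts V E \<Longrightarrow> w \<in> raag_words V \<Longrightarrow>
    induced_aut V E \<mu> (raag_class V E w) = raag_class V E (map_word \<mu> w)"
  by (simp add: induced_aut_def raag_class_in_carrier raag_map_class simplicial_map_graph_aut)

lemma induced_aut_inverse:
  assumes "\<mu> \<in> graph_auts V E" "\<nu> \<in> graph_auts V E" "\<And>v. v \<in> V \<Longrightarrow> \<mu> (\<nu> v) = v"
    and "P \<in> carrier (RAAG V E)"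
  shows "induced_aut V E \<mu> (induced_aut V E \<nu> P) = P"
proof -
  obtain w where w: "w \<in> raag_words V" "P = raag_class V E w"
    using assms(4) by (auto simp: RAAG_carrier)
  have "\<nu> \<in> V \<rightarrow> V"
    using simplicial_map_graph_aut[OF assms(2)] by (simp add: simplicial_map_def)
  then have "map_word \<nu> w \<in> raag_words V"
    using w(1) by (rule map_word_in_raag_words)
  moreover have "map_word \<mu> (map_word \<nu> w) = w"
    using w(1) assms(3) by (induction w) auto
  ultimately show ?thesis using w assms(1,2) by (simp add: induced_aut_class)
qed

lemma induced_aut_auto:
  assumes "\<mu> \<in> graph_auts V E"
  shows "induced_aut V E \<mu> \<in> auto (RAAG V E)"
proof -
  interpret group "RAAG V E" by (rule RAAG_group)
  have "induced_aut V E \<mu> \<in> hom (RAAG V E) (RAAG V E)"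
    using raag_map_hom[OF simplicial_map_graph_aut[OF assms]]
    by (rule hom_restrict) (simp add: induced_aut_def)
  moreover have "bij_betw (induced_aut V E \<mu>) (carrier (RAAG V E)) (carrier (RAAG V E))"
  proof (rule bij_betw_byWitness)
    let ?\<nu> = "\<lambda>v\<in>V. inv_into V \<mu> v"
    have bij: "bij_betw \<mu> V V" and "\<mu> \<in> Bij V" using assms by (auto simp: graph_auts_def Bij_def)
    then have \<nu>: "?\<nu> \<in> graph_auts V E"
      using subgroup.m_inv_closed[OF subgroup_graph_auts assms] by (simp add: inv_BijGroup)
    have \<mu>\<nu>: "\<mu> (?\<nu> v) = v" and \<nu>\<mu>: "?\<nu> (\<mu> v) = v" if "v \<in> V" for v
      using that bij bij_betw_inv_into_right bij_betw_inv_into_left bij_betw_apply by fastforce+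
    show "\<forall>P\<in>carrier (RAAG V E). induced_aut V E ?\<nu> (induced_aut V E \<mu> P) = P"
      using induced_aut_inverse[OF \<nu> assms \<nu>\<mu>] by blast
    show "\<forall>P\<in>carrier (RAAG V E). induced_aut V E \<mu> (induced_aut V E ?\<nu> P) = P"
      using induced_aut_inverse[OF assms \<nu> \<mu>\<nu>] by blast
    show "induced_aut V E \<mu> ` carrier (RAAG V E) \<subseteq> carrier (RAAG V E)"
      and "induced_aut V E ?\<nu> ` carrier (RAAG V E) \<subseteq> carrier (RAAG V E)"
      using raag_map_hom[OF simplicial_map_graph_aut[OF assms]]
        raag_map_hom[OF simplicial_map_graph_aut[OF \<nu>]]
      by (auto simp: induced_aut_def hom_def)
  qed
  ultimately show ?thesis by (simp add: auto_def Bij_def induced_aut_def)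
qed

section \<open>The action of FD on homology\<close>

locale covering =
  fixes VL :: "'a set" and EL :: "'a set set" and VG :: "'b set" and EG :: "'b set set"
    and \<phi> :: "'a \<Rightarrow> 'b"
  assumes finite_graph_cover: "finite_graph VL EL"
    and finite_graph_base: "finite_graph VG EG"
    and no_isolated_vertices_cover: "no_isolated_vertices VL EL"
    and covering_map: "covering_map VL EL VG EG \<phi>"
begin

abbreviation fibre :: "'b \<Rightarrow> 'a set" where
  "fibre x \<equiv> {a \<in> VL. \<phi> a = x}"

lemma finite_VL: "finite VL"
  using finite_graph_cover by (simp add: finite_graph_def)

lemma edge_in_VL: "{u, v} \<in> EL \<Longrightarrow> u \<in> VL \<and> v \<in> VL"
  using finite_graph_cover unfolding finite_graph_def simplicial_graph_def
  by (metis doubleton_eq_iff)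

lemma edge_image_distinct: "{u, v} \<in> EL \<Longrightarrow> \<phi> u \<noteq> \<phi> v"
proof
  assume "{u, v} \<in> EL" "\<phi> u = \<phi> v"
  moreover have "{\<phi> u, \<phi> v} \<in> EG" using covering_map \<open>{u, v} \<in> EL\<close> by (simp add: covering_map_def)
  ultimately have "{\<phi> v} \<in> EG" by simp
  then show False
    using finite_graph_base unfolding finite_graph_def simplicial_graph_def
    by (metis doubleton_eq_iff insert_absorb2)
qed

lemma simplicial_map_cover: "simplicial_map VL EL VG EG \<phi>"
  using covering_map by (auto simp: covering_map_def simplicial_map_def)

lemma inj_on_nbrs: "c \<in> VL \<Longrightarrow> inj_on \<phi> (nbrs EL c)"
  using covering_map by (simp add: covering_map_def bij_betw_def)

lemma ex_neighbour: "u \<in> VL \<Longrightarrow> \<exists>v. {u, v} \<in> EL"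
  using no_isolated_vertices_cover by (auto simp: no_isolated_vertices_def nbrs_def)

text \<open>In the application, m u a is the exponent sum of a in F(u) for some F in FD.\<close>

context
  fixes m :: "'a \<Rightarrow> 'a \<Rightarrow> int"
  assumes row_support: "\<And>u a. u \<in> VL \<Longrightarrow> m u a \<noteq> 0 \<Longrightarrow> a \<in> VL"
    and fibre_sum: "\<And>u x. u \<in> VL \<Longrightarrow> (\<Sum>a\<in>fibre x. m u a) = (if x = \<phi> u then 1 else 0)"
    and minor: "\<And>u v a b. {u, v} \<in> EL \<Longrightarrow> a \<in> VL \<Longrightarrow> b \<in> VL \<Longrightarrow> a \<noteq> b \<Longrightarrow> {a, b} \<notin> EL \<Longrightarrow>
      m u a * m v b = m u b * m v a"
begin

text \<open>A fibre contains no edge, so all minors of the rows v, u at pairs c, c' from the fibre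
  of \<phi> v vanish. Summing over c' gives m u c * 1 = m v c * 0, where 1 and 0 are the sums of
  the rows v and u over that fibre.\<close>

lemma row_vanishes_on_neighbour_fibre:
  assumes "{u, v} \<in> EL" "c \<in> fibre (\<phi> v)"
  shows "m u c = 0"
proof -
  have u: "u \<in> VL" and v: "v \<in> VL" using edge_in_VL[OF assms(1)] by auto
  have vu: "{v, u} \<in> EL" using assms(1) by (simp add: insert_commute)
  have "m v c * m u c' = m v c' * m u c" if "c' \<in> fibre (\<phi> v)" for c'
  proof (cases "c' = c")
    case False
    have "{c, c'} \<notin> EL" using edge_image_distinct[of c c'] assms(2) that by auto
    then show ?thesis using minor[OF vu, of c c'] assms(2) that False by auto
  qed simp
  then have "(\<Sum>c'\<in>fibre (\<phi> v). m v c * m u c') = (\<Sum>c'\<in>fibre (\<phi> v). m v c' * m u c)"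
    by (rule sum.cong[OF refl])
  then have "m v c * (\<Sum>c'\<in>fibre (\<phi> v). m u c') = (\<Sum>c'\<in>fibre (\<phi> v). m v c') * m u c"
    by (simp add: sum_distrib_left sum_distrib_right)
  then show ?thesis
    using fibre_sum[OF u, of "\<phi> v"] fibre_sum[OF v, of "\<phi> v"] edge_image_distinct[OF assms(1)]
    by simp
qed

lemma row_support_in_nbrs:
  assumes "u \<in> VL"
  obtains c where "c \<in> VL" "\<And>b. m u b \<noteq> 0 \<Longrightarrow> b \<in> nbrs EL c"
proof -
  obtain v where uv: "{u, v} \<in> EL" using ex_neighbour[OF assms] by blast
  have "(\<Sum>c\<in>fibre (\<phi> v). m v c) = 1" using fibre_sum[of v "\<phi> v"] edge_in_VL[OF uv] by simp
  then obtain c where c: "c \<in> fibre (\<phi> v)" "m v c \<noteq> 0"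
    by (metis (no_types, lifting) sum.neutral zero_neq_one)
  have "b \<in> nbrs EL c" if b: "m u b \<noteq> 0" for b
  proof -
    have bV: "b \<in> VL" using row_support[OF assms b] .
    have "b \<noteq> c" using row_vanishes_on_neighbour_fibre[OF uv c(1)] b by auto
    have "{b, c} \<in> EL"
    proof (rule ccontr)
      assume "{b, c} \<notin> EL"
      then have "m u b * m v c = m u c * m v b" using minor[OF uv bV _ \<open>b \<noteq> c\<close>] c(1) by simp
      then show False using row_vanishes_on_neighbour_fibre[OF uv c(1)] b c(2) by simp
    qed
    then show ?thesis by (simp add: nbrs_def insert_commute)
  qed
  with c show ?thesis using that by blast
qed

text \<open>The support of row u lies in a neighbourhood, on which \<phi> is injective, so each nonzero
  entry is the sum of the row over its whole fibre, hence equal to 1.\<close>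

lemma unit_row:
  assumes "u \<in> VL"
  shows "\<exists>a\<in>fibre (\<phi> u). \<forall>b. m u b = (if b = a then 1 else 0)"
proof -
  obtain c where c: "c \<in> VL" "\<And>b. m u b \<noteq> 0 \<Longrightarrow> b \<in> nbrs EL c"
    using row_support_in_nbrs[OF assms] by blast
  have same_fibre: "b = b'" if "m u b \<noteq> 0" "m u b' \<noteq> 0" "\<phi> b = \<phi> b'" for b b'
    using inj_onD[OF inj_on_nbrs[OF c(1)]] c(2) that by blast
  have entry: "m u b = (if \<phi> b = \<phi> u then 1 else 0)" if "m u b \<noteq> 0" for b
  proof -
    have "m u a = 0" if "a \<in> fibre (\<phi> b)" "a \<noteq> b" for a
      using same_fibre[of b a] \<open>m u b \<noteq> 0\<close> that by auto
    then have "(\<Sum>a\<in>{b}. m u a) = (\<Sum>a\<in>fibre (\<phi> b). m u a)"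
      using row_support[OF assms that] finite_VL by (intro sum.mono_neutral_left) auto
    then show ?thesis using fibre_sum[OF assms, of "\<phi> b"] by (simp add: eq_commute)
  qed
  have "(\<Sum>a\<in>fibre (\<phi> u). m u a) = 1" using fibre_sum[OF assms] by simp
  then obtain a where a: "a \<in> fibre (\<phi> u)" "m u a \<noteq> 0"
    by (metis (no_types, lifting) sum.neutral zero_neq_one)
  have "m u b = (if b = a then 1 else 0)" for b
  proof (cases "m u b = 0")
    case False
    then have "\<phi> b = \<phi> u" "m u b = 1" using entry[OF False] by (auto split: if_splits)
    moreover from this have "b = a" using same_fibre[OF False a(2)] a(1) by simp
    ultimately show ?thesis by simp
  qed (use a(2) in auto)
  with a(1) show ?thesis by blast
qed

end

lemma FD_hom: "F \<in> FD VL EL VG EG \<phi> \<Longrightarrow> F \<in> hom (RAAG VL EL) (RAAG VL EL)"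
  by (simp add: FD_def auto_def)

lemma FD_closed: "F \<in> FD VL EL VG EG \<phi> \<Longrightarrow> P \<in> carrier (RAAG VL EL) \<Longrightarrow> F P \<in> carrier (RAAG VL EL)"
  using FD_hom by (auto simp: hom_def)

lemma FD_fibre_sum:
  assumes "F \<in> FD VL EL VG EG \<phi>" "u \<in> VL"
  shows "(\<Sum>a\<in>fibre x. raag_exp a (F (raag_gen VL EL u))) = (if x = \<phi> u then 1 else 0)"
proof -
  have g: "raag_gen VL EL u \<in> carrier (RAAG VL EL)" using assms(2) by (rule raag_gen_in_carrier)
  have "(\<Sum>a\<in>fibre x. raag_exp a (F (raag_gen VL EL u)))
      = raag_exp x (raag_map VL EL VG EG \<phi> (F (raag_gen VL EL u)))"
    using FD_closed[OF assms(1) g]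
    by (simp add: raag_exp_raag_map[OF simplicial_map_cover finite_VL])
  also have "\<dots> = raag_exp x (raag_map VL EL VG EG \<phi> (raag_gen VL EL u))"
    using assms(1) g by (simp add: FD_def)
  also have "\<dots> = (\<Sum>a\<in>fibre x. if a = u then 1 else 0)"
    by (simp add: raag_exp_raag_map[OF simplicial_map_cover finite_VL g])
  also have "\<dots> = (if x = \<phi> u then 1 else 0)"
    using assms(2) finite_VL by (auto simp: sum.delta)
  finally show ?thesis .
qed

lemma FD_exp_minor:
  assumes "F \<in> FD VL EL VG EG \<phi>" "{u, v} \<in> EL" "a \<noteq> b" "{a, b} \<notin> EL"
  shows "raag_exp a (F (raag_gen VL EL u)) * raag_exp b (F (raag_gen VL EL v))
    = raag_exp b (F (raag_gen VL EL u)) * raag_exp a (F (raag_gen VL EL v))"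
proof -
  interpret h: group_hom "RAAG VL EL" "RAAG VL EL" F
    using FD_hom[OF assms(1)] RAAG_group by (auto simp: group_hom_def group_hom_axioms_def)
  have uv: "u \<in> VL" "v \<in> VL" using edge_in_VL[OF assms(2)] by auto
  then have "F (raag_gen VL EL u) \<otimes>\<^bsub>RAAG VL EL\<^esub> F (raag_gen VL EL v)
      = F (raag_gen VL EL v) \<otimes>\<^bsub>RAAG VL EL\<^esub> F (raag_gen VL EL u)"
    by (metis h.hom_mult raag_gen_commute[OF assms(2)] raag_gen_in_carrier)
  from raag_exp_minor_eq_if_commute[OF _ _ this assms(3,4)] show ?thesis
    using uv by (simp add: raag_gen_in_carrier ac_simps)
qed

definition homology_perm :: "('a word set \<Rightarrow> 'a word set) \<Rightarrow> 'a \<Rightarrow> 'a" where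
  "homology_perm F =
    (\<lambda>u\<in>VL. THE a. \<forall>b. raag_exp b (F (raag_gen VL EL u)) = (if b = a then 1 else 0))"

lemma homology_perm_eqI:
  assumes "u \<in> VL" "\<And>b. raag_exp b (F (raag_gen VL EL u)) = (if b = a then 1 else 0)"
  shows "homology_perm F u = a"
proof -
  have "(THE a. \<forall>b. raag_exp b (F (raag_gen VL EL u)) = (if b = a then 1 else 0)) = a"
  proof (rule the_equality)
    fix a' assume "\<forall>b. raag_exp b (F (raag_gen VL EL u)) = (if b = a' then 1 else 0)"
    then show "a' = a" using assms(2)[of a'] by (simp split: if_splits)
  qed (use assms(2) in simp)
  with assms(1) show ?thesis by (simp add: homology_perm_def)
qed

lemma homology_perm_FD:
  assumes "F \<in> FD VL EL VG EG \<phi>" "u \<in> VL"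
  shows "homology_perm F u \<in> fibre (\<phi> u)"
    and "raag_exp b (F (raag_gen VL EL u)) = (if b = homology_perm F u then 1 else 0)"
proof -
  have "\<exists>a\<in>fibre (\<phi> u). \<forall>b. raag_exp b (F (raag_gen VL EL u)) = (if b = a then 1 else 0)"
  proof (rule unit_row[OF _ _ _ assms(2)])
    show "a \<in> VL" if "u \<in> VL" "raag_exp a (F (raag_gen VL EL u)) \<noteq> 0" for u a
      using that raag_exp_not_in_vertices[OF FD_closed[OF assms(1) raag_gen_in_carrier]] by blast
  qed (use FD_fibre_sum[OF assms(1)] FD_exp_minor[OF assms(1)] in auto)
  then obtain a where "a \<in> fibre (\<phi> u)"
    and "\<And>b. raag_exp b (F (raag_gen VL EL u)) = (if b = a then 1 else 0)"
    by blast
  with homology_perm_eqI[OF assms(2)] show "homology_perm F u \<in> fibre (\<phi> u)"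
    and "raag_exp b (F (raag_gen VL EL u)) = (if b = homology_perm F u then 1 else 0)"
    by simp_all
qed

lemma raag_exp_FD_apply:
  assumes "F \<in> FD VL EL VG EG \<phi>" "P \<in> carrier (RAAG VL EL)"
  shows "raag_exp a (F P) = (\<Sum>b\<in>{b\<in>VL. homology_perm F b = a}. raag_exp b P)"
proof -
  have "raag_exp a (F P) = (\<Sum>b\<in>VL. raag_exp b P * raag_exp a (F (raag_gen VL EL b)))"
    by (rule raag_exp_hom_apply[OF FD_hom[OF assms(1)] finite_VL assms(2)])
  also have "\<dots> = (\<Sum>b\<in>VL. if homology_perm F b = a then raag_exp b P else 0)"
    by (rule sum.cong) (simp_all add: homology_perm_FD(2)[OF assms(1)])
  finally show ?thesis by (simp add: sum.inter_filter finite_VL)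
qed

lemma homology_perm_compose:
  assumes "F \<in> FD VL EL VG EG \<phi>" "F' \<in> FD VL EL VG EG \<phi>"
  shows "homology_perm (compose (carrier (RAAG VL EL)) F F')
    = compose VL (homology_perm F) (homology_perm F')"
proof
  fix u
  show "homology_perm (compose (carrier (RAAG VL EL)) F F') u
      = compose VL (homology_perm F) (homology_perm F') u"
  proof (cases "u \<in> VL")
    case False
    then show ?thesis by (simp add: homology_perm_def compose_def)
  next
    case True
    have g: "raag_gen VL EL u \<in> carrier (RAAG VL EL)" using True by (rule raag_gen_in_carrier)
    have v: "homology_perm F' u \<in> VL" using homology_perm_FD(1)[OF assms(2) True] by simp
    have "raag_exp b (F (F' (raag_gen VL EL u)))
        = (if b = homology_perm F (homology_perm F' u) then 1 else 0)"
      for b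
    proof -
      have "raag_exp b (F (F' (raag_gen VL EL u)))
          = (\<Sum>c\<in>{c\<in>VL. homology_perm F c = b}. raag_exp c (F' (raag_gen VL EL u)))"
        by (rule raag_exp_FD_apply[OF assms(1) FD_closed[OF assms(2) g]])
      also have "\<dots> = (\<Sum>c\<in>{c\<in>VL. homology_perm F c = b}. if c = homology_perm F' u then 1 else 0)"
        by (simp add: homology_perm_FD(2)[OF assms(2) True])
      also have "\<dots> = (if b = homology_perm F (homology_perm F' u) then 1 else 0)"
        using v finite_VL by (auto simp: sum.delta)
      finally show ?thesis .
    qed
    with True g show ?thesis by (simp add: homology_perm_eqI compose_def)
  qed
qed

lemma homology_perm_id: "homology_perm (\<lambda>P\<in>carrier (RAAG VL EL). P) = (\<lambda>u\<in>VL. u)"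
proof
  fix u
  show "homology_perm (\<lambda>P\<in>carrier (RAAG VL EL). P) u = (\<lambda>u\<in>VL. u) u"
  proof (cases "u \<in> VL")
    case True
    then show ?thesis by (intro homology_perm_eqI) (simp_all add: raag_gen_in_carrier)
  qed (simp add: homology_perm_def)
qed

lemma homology_perm_edge:
  assumes "F \<in> FD VL EL VG EG \<phi>" "{u, v} \<in> EL"
  shows "{homology_perm F u, homology_perm F v} \<in> EL"
proof (rule ccontr)
  assume non_edge: "{homology_perm F u, homology_perm F v} \<notin> EL"
  have u: "u \<in> VL" and v: "v \<in> VL" using edge_in_VL[OF assms(2)] by auto
  have distinct: "homology_perm F u \<noteq> homology_perm F v"
    using homology_perm_FD(1)[OF assms(1) u] homology_perm_FD(1)[OF assms(1) v]
      edge_image_distinct[OF assms(2)]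
    by auto
  from FD_exp_minor[OF assms distinct non_edge] distinct show False
    by (simp add: homology_perm_FD(2)[OF assms(1) u] homology_perm_FD(2)[OF assms(1) v])
qed

lemma homology_perm_inverse:
  assumes "F \<in> FD VL EL VG EG \<phi>"
  obtains F' where "F' \<in> FD VL EL VG EG \<phi>"
    and "\<And>u. u \<in> VL \<Longrightarrow> homology_perm F (homology_perm F' u) = u"
    and "\<And>u. u \<in> VL \<Longrightarrow> homology_perm F' (homology_perm F u) = u"
proof -
  interpret FD: group "FD_group VL EL VG EG \<phi>" by (rule group_FD_group)
  define F' where "F' = inv\<^bsub>FD_group VL EL VG EG \<phi>\<^esub> F"
  have F': "F' \<in> FD VL EL VG EG \<phi>" using FD.inv_closed assms by (simp add: F'_def)
  have "F \<in> carrier (FD_group VL EL VG EG \<phi>)" using assms by simp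
  then have "F \<otimes>\<^bsub>FD_group VL EL VG EG \<phi>\<^esub> F' = \<one>\<^bsub>FD_group VL EL VG EG \<phi>\<^esub>"
    and "F' \<otimes>\<^bsub>FD_group VL EL VG EG \<phi>\<^esub> F = \<one>\<^bsub>FD_group VL EL VG EG \<phi>\<^esub>"
    unfolding F'_def by (rule FD.r_inv, rule FD.l_inv)
  then have "compose (carrier (RAAG VL EL)) F F' = (\<lambda>P\<in>carrier (RAAG VL EL). P)"
    and "compose (carrier (RAAG VL EL)) F' F = (\<lambda>P\<in>carrier (RAAG VL EL). P)"
    using assms F' by simp_all
  then have FF': "compose VL (homology_perm F) (homology_perm F') = (\<lambda>u\<in>VL. u)"
    and F'F: "compose VL (homology_perm F') (homology_perm F) = (\<lambda>u\<in>VL. u)"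
    using assms F' by (simp_all add: homology_perm_compose[symmetric] homology_perm_id)
  show ?thesis
  proof (rule that[OF F'])
    fix u assume "u \<in> VL"
    then show "homology_perm F (homology_perm F' u) = u" "homology_perm F' (homology_perm F u) = u"
      using compose_eq[of u VL "homology_perm F" "homology_perm F'"]
        compose_eq[of u VL "homology_perm F'" "homology_perm F"] by (simp_all add: FF' F'F)
  qed
qed

lemma homology_perm_deck:
  assumes "F \<in> FD VL EL VG EG \<phi>"
  shows "homology_perm F \<in> deck VL EL \<phi>"
proof -
  obtain F' where F': "F' \<in> FD VL EL VG EG \<phi>"
    and inverse: "\<And>u. u \<in> VL \<Longrightarrow> homology_perm F (homology_perm F' u) = u"
      "\<And>u. u \<in> VL \<Longrightarrow> homology_perm F' (homology_perm F u) = u"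
    using homology_perm_inverse[OF assms] by blast
  have into: "homology_perm G u \<in> VL" if "G \<in> FD VL EL VG EG \<phi>" "u \<in> VL" for G u
    using homology_perm_FD(1)[OF that] by simp
  have "bij_betw (homology_perm F) VL VL"
    using inverse into[OF assms] into[OF F']
    by (intro bij_betw_byWitness[where f' = "homology_perm F'"]) auto
  then have "homology_perm F \<in> Bij VL" by (simp add: Bij_def homology_perm_def)
  moreover have "{homology_perm F u, homology_perm F v} \<in> EL \<longleftrightarrow> {u, v} \<in> EL"
    if "u \<in> VL" "v \<in> VL" for u v
    using homology_perm_edge[OF assms, of u v]
      homology_perm_edge[OF F', of "homology_perm F u" "homology_perm F v"]
      inverse that by auto
  moreover have "\<phi> (homology_perm F u) = \<phi> u" if "u \<in> VL" for u
    using homology_perm_FD(1)[OF assms that] by simp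
  ultimately show ?thesis by (simp add: deck_def graph_auts_def)
qed

lemma induced_aut_FD:
  assumes "\<mu> \<in> deck VL EL \<phi>"
  shows "induced_aut VL EL \<mu> \<in> FD VL EL VG EG \<phi>"
proof -
  have \<mu>: "\<mu> \<in> graph_auts VL EL" and fibre: "\<And>u. u \<in> VL \<Longrightarrow> \<phi> (\<mu> u) = \<phi> u"
    using assms by (auto simp: deck_def)
  have "raag_map VL EL VG EG \<phi> (induced_aut VL EL \<mu> P) = raag_map VL EL VG EG \<phi> P"
    if P: "P \<in> carrier (RAAG VL EL)" for P
  proof -
    obtain w where w: "w \<in> raag_words VL" "P = raag_class VL EL w"
      using P by (auto simp: RAAG_carrier)
    have "map_word \<mu> w \<in> raag_words VL"
      using simplicial_map_graph_aut[OF \<mu>] w(1) unfolding simplicial_map_def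
      by (blast intro: map_word_in_raag_words)
    moreover have "map_word (\<phi> \<circ> \<mu>) w = map_word \<phi> w"
      using fibre by (intro map_word_cong[OF w(1)]) simp
    ultimately show ?thesis
      using w
      by (simp add: induced_aut_class[OF \<mu>] raag_map_class[OF simplicial_map_cover]
          map_word_map_word)
  qed
  with induced_aut_auto[OF \<mu>] show ?thesis by (simp add: FD_def)
qed

lemma homology_perm_induced_aut:
  assumes "\<mu> \<in> deck VL EL \<phi>"
  shows "homology_perm (induced_aut VL EL \<mu>) = \<mu>"
proof
  fix u
  have \<mu>: "\<mu> \<in> graph_auts VL EL" using assms by (simp add: deck_def)
  show "homology_perm (induced_aut VL EL \<mu>) u = \<mu> u"
  proof (cases "u \<in> VL")
    case False
    then show ?thesis
      using \<mu> by (simp add: homology_perm_def graph_auts_def Bij_def extensional_def)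
  next
    case True
    have "induced_aut VL EL \<mu> (raag_gen VL EL u) = raag_gen VL EL (\<mu> u)"
      using induced_aut_class[OF \<mu>, of "[(u, False)]"] True by (simp add: raag_gen_def)
    with True show ?thesis by (intro homology_perm_eqI) simp_all
  qed
qed

lemma group_hom_homology_perm:
  "group_hom (FD_group VL EL VG EG \<phi>) (deck_group VL EL \<phi>) homology_perm"
proof -
  have "homology_perm \<in> hom (FD_group VL EL VG EG \<phi>) (deck_group VL EL \<phi>)"
    by (rule homI) (simp_all add: homology_perm_deck homology_perm_compose)
  then show ?thesis
    using group_FD_group[of VL EL VG EG \<phi>] group_deck_group[of VL EL \<phi>]
    by (simp add: group_hom_def group_hom_axioms_def)
qed

lemma homology_perm_eq_id_iff_IA:
  assumes F: "F \<in> FD VL EL VG EG \<phi>"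
  shows "homology_perm F = (\<lambda>u\<in>VL. u) \<longleftrightarrow> F \<in> IA (RAAG VL EL)"
proof
  assume id: "homology_perm F = (\<lambda>u\<in>VL. u)"
  have "raag_exp a (F P) = raag_exp a P" if "P \<in> carrier (RAAG VL EL)" for P a
  proof (cases "a \<in> VL")
    case True
    then have "{b \<in> VL. homology_perm F b = a} = {a}" by (auto simp: id)
    then show ?thesis by (simp add: raag_exp_FD_apply[OF F that])
  next
    case False
    have "raag_exp a (F P) = (\<Sum>b\<in>{b \<in> VL. homology_perm F b = a}. raag_exp b P)"
      by (rule raag_exp_FD_apply[OF F that])
    also have "{b \<in> VL. homology_perm F b = a} = {}" using False by (auto simp: id)
    finally show ?thesis using raag_exp_not_in_vertices[OF that False] by simp
  qed
  moreover have "F \<in> auto (RAAG VL EL)" using F by (simp add: FD_def)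
  ultimately show "F \<in> IA (RAAG VL EL)" by (simp add: IA_iff_preserves_raag_exp)
next
  assume "F \<in> IA (RAAG VL EL)"
  moreover have "F \<in> auto (RAAG VL EL)" using F by (simp add: FD_def)
  ultimately have preserves: "raag_exp a (F P) = raag_exp a P" if "P \<in> carrier (RAAG VL EL)" for P a
    using that by (simp add: IA_iff_preserves_raag_exp)
  show "homology_perm F = (\<lambda>u\<in>VL. u)"
  proof
    fix u
    show "homology_perm F u = (\<lambda>u\<in>VL. u) u"
    proof (cases "u \<in> VL")
      case True
      then show ?thesis
        by (intro homology_perm_eqI) (simp_all add: preserves raag_gen_in_carrier)
    qed (simp add: homology_perm_def)
  qed
qed

lemma kernel_homology_perm:
  "kernel (FD_group VL EL VG EG \<phi>) (deck_group VL EL \<phi>) homology_perm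
    = FD VL EL VG EG \<phi> \<inter> IA (RAAG VL EL)"
  using homology_perm_eq_id_iff_IA by (auto simp: kernel_def)

lemma homology_perm_onto: "homology_perm ` FD VL EL VG EG \<phi> = deck VL EL \<phi>"
  using homology_perm_deck induced_aut_FD homology_perm_induced_aut
  by (force intro: image_eqI[OF sym])

end

theorem theorem7p3:
  fixes VL :: "'a set" and EL :: "'a set set" and VG :: "'b set" and EG :: "'b set set"
    and \<phi> :: "'a \<Rightarrow> 'b"
  assumes "finite_graph VL EL" and "finite_graph VG EG"
    and "no_isolated_vertices VL EL" and "no_isolated_vertices VG EG"
    and "regular_covering VL EL VG EG \<phi>"
  shows "FD VL EL VG EG \<phi> \<inter> IA (RAAG VL EL) \<lhd> FD_group VL EL VG EG \<phi>
    \<and> FD_group VL EL VG EG \<phi> Mod (FD VL EL VG EG \<phi> \<inter> IA (RAAG VL EL)) \<cong> deck_group VL EL \<phi>"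
proof -
  interpret covering VL EL VG EG \<phi>
    using assms by unfold_locales (auto simp: regular_covering_def)
  interpret group_hom "FD_group VL EL VG EG \<phi>" "deck_group VL EL \<phi>" homology_perm
    by (rule group_hom_homology_perm)
  show ?thesis
    using normal_kernel FactGroup_iso homology_perm_onto kernel_homology_perm by simp
qed

end
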